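(* Let $I\in\mathbb{I}_{m,n}$ be written in staircase form $I=\bigsqcup_{i=s}^t[b_i,d_i]_i$. Let $C$ be the set of full subquivers of $G_{m,n}$ with vertex set $I_0\cup\{v\}$, where $v$ is a vertex of $G_{m,n}$ (i.e. lies within the grid) of one of the following forms: (1) $v=(j,b_j-1)$ for some $j\in\{s,\dots,t\}$; (2) $v=(j,d_j+1)$ for some $j\in\{s,\dots,t\}$; (3) $v=(t+1,b_t)$; (4) $v=(s-1,d_s)$. Then $\mathrm{Cov}(I)=C\cap\mathbb{I}_{m,n}$.
   Context: For integers $m,n\ge1$, $G_{m,n}$ is the equioriented commutative $m\times n$ grid: the quiver with vertex set $\{(i,j):1\le i\le m,\ 1\le j\le n\}$ and arrows $(i,j)\to(i,j+1)$ and $(i,j)\to(i+1,j)$, bound by all commutativity relations. An interval of $G_{m,n}$ is a nonempty full subquiver $I$ which is connected (as an undirected graph) and convex (whenever $x,y\in I_0$ and there are paths $x\to z$ and $z\to y$ in $G_{m,n}$, then $z\in I_0$); $I_0$ denotes its vertex set. $\mathbb{I}_{m,n}$ is the set of intervals, partially ordered by $I\le J\iff I_0\subseteq J_0$; $\mathrm{Cov}(I)$ is the set of $J\in\mathbb{I}_{m,n}$ covering $I$. Staircase form: every $I\in\mathbb{I}_{m,n}$ can be written as $\bigsqcup_{i=s}^t[b_i,d_i]_i$ with $1\le s\le t\le m$, $1\le b_i\le d_i\le n$ and $b_{i+1}\le b_i\le d_{i+1}\le d_i$ for $s\le i<t$, meaning $I_0=\{(i,x): s\le i\le t,\ b_i\le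 x\le d_i\}$. *)

theory Defs
  imports Main
begin

text \<open>Vertices of the grid quiver G_{m,n} are pairs (i,j) with 1 \<le> i \<le> m, 1 \<le> j \<le> n.
A full subquiver is determined by its vertex set, so intervals are represented by vertex sets.\<close>

definition grid :: "nat \<Rightarrow> nat \<Rightarrow> (nat \<times> nat) set" where
  "grid m n = {1..m} \<times> {1..n}"

definition grid_arrow :: "nat \<Rightarrow> nat \<Rightarrow> nat \<times> nat \<Rightarrow> nat \<times> nat \<Rightarrow> bool" where
  "grid_arrow m n x y \<longleftrightarrow> x \<in> grid m n \<and> y \<in> grid m n \<and>
     ((fst y = fst x \<and> snd y = snd x + 1) \<or> (fst y = fst x + 1 \<and> snd y = snd x))"

definition grid_path :: "nat \<Rightarrow> nat \<Rightarrow> nat \<times> nat \<Rightarrow> nat \<times> nat \<Rightarrow> bool" where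
  "grid_path m n x y \<longleftrightarrow> x \<in> grid m n \<and> (grid_arrow m n)\<^sup>*\<^sup>* x y"

definition sub_connected :: "nat \<Rightarrow> nat \<Rightarrow> (nat \<times> nat) set \<Rightarrow> bool" where
  "sub_connected m n S \<longleftrightarrow>
     (\<forall>x\<in>S. \<forall>y\<in>S. (\<lambda>u v. u \<in> S \<and> v \<in> S \<and> (grid_arrow m n u v \<or> grid_arrow m n v u))\<^sup>*\<^sup>* x y)"

definition sub_convex :: "nat \<Rightarrow> nat \<Rightarrow> (nat \<times> nat) set \<Rightarrow> bool" where
  "sub_convex m n S \<longleftrightarrow>
     (\<forall>x\<in>S. \<forall>y\<in>S. \<forall>z. grid_path m n x z \<and> grid_path m n z y \<longrightarrow> z \<in> S)"

definition is_interval :: "nat \<Rightarrow> nat \<Rightarrow> (nat \<times> nat) set \<Rightarrow> bool" where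
  "is_interval m n S \<longleftrightarrow> S \<noteq> {} \<and> S \<subseteq> grid m n \<and> sub_connected m n S \<and> sub_convex m n S"

definition intervals :: "nat \<Rightarrow> nat \<Rightarrow> (nat \<times> nat) set set" where
  "intervals m n = {S. is_interval m n S}"

definition Cov :: "nat \<Rightarrow> nat \<Rightarrow> (nat \<times> nat) set \<Rightarrow> (nat \<times> nat) set set" where
  "Cov m n I = {J \<in> intervals m n. I \<subset> J \<and> \<not> (\<exists>K \<in> intervals m n. I \<subset> K \<and> K \<subset> J)}"

definition staircase :: "nat \<Rightarrow> nat \<Rightarrow> nat \<Rightarrow> nat \<Rightarrow> (nat \<Rightarrow> nat) \<Rightarrow> (nat \<Rightarrow> nat) \<Rightarrow> (nat \<times> nat) set \<Rightarrow> bool" where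
  "staircase m n s t b d I \<longleftrightarrow>
     1 \<le> s \<and> s \<le> t \<and> t \<le> m \<and>
     (\<forall>i. s \<le> i \<and> i \<le> t \<longrightarrow> 1 \<le> b i \<and> b i \<le> d i \<and> d i \<le> n) \<and>
     (\<forall>i. s \<le> i \<and> i < t \<longrightarrow> b (i+1) \<le> b i \<and> b i \<le> d (i+1) \<and> d (i+1) \<le> d i) \<and>
     I = {(i, x). s \<le> i \<and> i \<le> t \<and> b i \<le> x \<and> x \<le> d i}"

end

theory Submission
  imports Defs "HOL-Library.Product_Order"
begin

text \<open>An interval J \<supset> I is connected, so some edge of J leaves I, and convexity of J then forces
  one of the listed vertices into J. Again by convexity, such a vertex can be moved within J along
  the block of rows sharing the same end to the corner of that block (its first row for right
  ends, its last row for left ends); adding the corner vertex to I gives an interval. So every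
  interval J \<supset> I contains a one-point extension of I by a listed vertex, and the covers of I
  are exactly these extensions.\<close>

lemma grid_eq_atLeastAtMost: "grid m n = {(1, 1)..(m, n)}"
  by (simp add: grid_def atLeastAtMost_prod_eq)

lemma grid_arrow_le: "grid_arrow m n x y \<Longrightarrow> x \<le> y"
  by (auto simp: grid_arrow_def less_eq_prod_def)

lemma grid_arrow_reaches:
  assumes "x \<in> grid m n" "y \<in> grid m n" "x \<le> y"
  shows "(grid_arrow m n)\<^sup>*\<^sup>* x y"
  using assms
proof (induction "fst y + snd y - (fst x + snd x)" arbitrary: y)
  case 0
  then have "x = y" by (simp add: less_eq_prod_def prod_eq_iff)
  then show ?case by simp
next
  case (Suc k)
  obtain i j where y: "y = (i, j)" by (cases y)
  consider "fst x < i" | "snd x < j"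
    using Suc.hyps(2) Suc.prems(3) y by (fastforce simp: less_eq_prod_def)
  then obtain y' where "x \<le> y'" "y' \<in> grid m n" "grid_arrow m n y' y"
      "fst y + snd y - (fst x + snd x) = Suc (fst y' + snd y' - (fst x + snd x))"
  proof cases
    case 1
    then show ?thesis
      using that[of "(i - 1, j)"] Suc.prems y by (auto simp: grid_def grid_arrow_def less_eq_prod_def)
  next
    case 2
    then show ?thesis
      using that[of "(i, j - 1)"] Suc.prems y by (auto simp: grid_def grid_arrow_def less_eq_prod_def)
  qed
  with Suc show ?case by (metis nat.inject rtranclp.rtrancl_into_rtrancl)
qed

lemma grid_path_iff: "grid_path m n x y \<longleftrightarrow> x \<in> grid m n \<and> y \<in> grid m n \<and> x \<le> y"
proof
  assume "grid_path m n x y"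
  then have "(grid_arrow m n)\<^sup>*\<^sup>* x y" "x \<in> grid m n" by (auto simp: grid_path_def)
  then show "x \<in> grid m n \<and> y \<in> grid m n \<and> x \<le> y"
    by induction (auto simp: grid_arrow_def intro: order_trans grid_arrow_le)
qed (auto simp: grid_path_def grid_arrow_reaches)

lemma sub_convex_iff:
  "S \<subseteq> grid m n \<Longrightarrow> sub_convex m n S \<longleftrightarrow> (\<forall>p\<in>S. \<forall>q\<in>S. \<forall>z. p \<le> z \<and> z \<le> q \<longrightarrow> z \<in> S)"
  unfolding sub_convex_def grid_path_iff grid_eq_atLeastAtMost
  by (meson atLeastAtMost_iff order_trans subsetD)

lemma interval_convex:
  "is_interval m n J \<Longrightarrow> p \<in> J \<Longrightarrow> q \<in> J \<Longrightarrow> p \<le> z \<Longrightarrow> z \<le> q \<Longrightarrow> z \<in> J"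
  unfolding is_interval_def using sub_convex_iff by blast

lemma sub_connected_insert:
  assumes "sub_connected m n S" "u \<in> S" "grid_arrow m n u v \<or> grid_arrow m n v u"
  shows "sub_connected m n (insert v S)"
  unfolding sub_connected_def
proof (intro ballI)
  let ?R = "\<lambda>x y. x \<in> insert v S \<and> y \<in> insert v S \<and> (grid_arrow m n x y \<or> grid_arrow m n y x)"
  have sym: "symp ?R\<^sup>*\<^sup>*" by (rule symp_rtranclp) (auto intro: sympI)
  have from_u: "?R\<^sup>*\<^sup>* u x" if "x \<in> insert v S" for x
  proof (cases "x = v")
    case True
    then show ?thesis using assms(2,3) by (auto intro: r_into_rtranclp)
  next
    case False
    then have "(\<lambda>x y. x \<in> S \<and> y \<in> S \<and> (grid_arrow m n x y \<or> grid_arrow m n y x))\<^sup>*\<^sup>* u x"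
      using assms(1,2) that unfolding sub_connected_def by blast
    then show ?thesis by (rule mono_rtranclp[rule_format, rotated]) auto
  qed
  fix x y assume "x \<in> insert v S" "y \<in> insert v S"
  then show "?R\<^sup>*\<^sup>* x y" using from_u sym by (meson rtranclp_trans sympD)
qed

lemma interval_insert:
  assumes I: "is_interval m n I" and v: "v \<in> grid m n" and u: "u \<in> I"
    and adj: "grid_arrow m n u v \<or> grid_arrow m n v u"
    and below: "\<And>i x r y. (i, x) \<in> I \<Longrightarrow> (i, x) \<le> (r, y) \<Longrightarrow> (r, y) \<le> v \<Longrightarrow>
      (r, y) \<in> insert v I"
    and above: "\<And>i x r y. (i, x) \<in> I \<Longrightarrow> v \<le> (r, y) \<Longrightarrow> (r, y) \<le> (i, x) \<Longrightarrow>
      (r, y) \<in> insert v I"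
  shows "is_interval m n (insert v I)"
proof -
  have grid: "insert v I \<subseteq> grid m n" using I v by (auto simp: is_interval_def)
  have "sub_convex m n (insert v I)"
    unfolding sub_convex_iff[OF grid]
    using interval_convex[OF I] below above by (metis insert_iff order_antisym surj_pair)
  then show ?thesis
    using I grid sub_connected_insert[OF _ u adj] by (auto simp: is_interval_def)
qed

lemma rtranclp_leaves:
  assumes "R\<^sup>*\<^sup>* x y" "x \<in> A" "y \<notin> A"
  obtains u w where "R u w" "u \<in> A" "w \<notin> A"
  using assms by (induction rule: rtranclp_induct) auto

lemma sub_connected_leaves:
  assumes "sub_connected m n J" "x \<in> I" "I \<subseteq> J" "y \<in> J" "y \<notin> I"
  obtains u w where "u \<in> I" "w \<in> J" "w \<notin> I" "grid_arrow m n u w \<or> grid_arrow m n w u"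
proof -
  have "(\<lambda>u w. u \<in> J \<and> w \<in> J \<and> (grid_arrow m n u w \<or> grid_arrow m n w u))\<^sup>*\<^sup>* x y"
    using assms by (auto simp: sub_connected_def)
  then show thesis using assms(2,5) that by (elim rtranclp_leaves) auto
qed

lemma Cov_eq_insert:
  assumes fresh: "\<forall>v\<in>S. v \<notin> I"
    and extend: "\<And>J. J \<in> intervals m n \<Longrightarrow> I \<subset> J \<Longrightarrow> \<exists>v\<in>S \<inter> J. insert v I \<in> intervals m n"
  shows "Cov m n I = {J. \<exists>v\<in>S. J = insert v I} \<inter> intervals m n"
proof (intro equalityI subsetI)
  fix J assume J: "J \<in> Cov m n I"
  then have "J \<in> intervals m n" "I \<subset> J" by (auto simp: Cov_def)
  then obtain v where "v \<in> S" "v \<in> J" "insert v I \<in> intervals m n"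
    using extend by blast
  moreover have "I \<subset> insert v I" "insert v I \<subseteq> J"
    using J fresh \<open>v \<in> S\<close> \<open>v \<in> J\<close> by (auto simp: Cov_def)
  ultimately show "J \<in> {J. \<exists>v\<in>S. J = insert v I} \<inter> intervals m n"
    using J unfolding Cov_def by blast
next
  fix J assume "J \<in> {J. \<exists>v\<in>S. J = insert v I} \<inter> intervals m n"
  then obtain v where "v \<in> S" "J = insert v I" "J \<in> intervals m n" by blast
  moreover have "K = I \<or> K = J" if "I \<subseteq> K" "K \<subseteq> J" for K
    using that \<open>J = insert v I\<close> by blast
  ultimately show "J \<in> Cov m n I" using fresh by (auto simp: Cov_def)
qed

locale staircase_interval =
  fixes m n s t :: nat and b d :: "nat \<Rightarrow> nat" and I :: "(nat \<times> nat) set"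
  assumes staircase: "staircase m n s t b d I" and interval: "is_interval m n I"
begin

lemma mem_iff: "(i, x) \<in> I \<longleftrightarrow> s \<le> i \<and> i \<le> t \<and> b i \<le> x \<and> x \<le> d i"
  using staircase by (simp add: staircase_def)

lemma rows: "1 \<le> s" "s \<le> t" "t \<le> m"
  using staircase by (auto simp: staircase_def)

lemma row_bounds: "s \<le> i \<Longrightarrow> i \<le> t \<Longrightarrow> 1 \<le> b i \<and> b i \<le> d i \<and> d i \<le> n"
  using staircase by (auto simp: staircase_def)

lemma ends_step: "s \<le> i \<Longrightarrow> i < t \<Longrightarrow> b (Suc i) \<le> b i \<and> d (Suc i) \<le> d i"
  using staircase by (auto simp: staircase_def)

lemma ends_antimono:
  assumes "s \<le> i" "i \<le> r" "r \<le> t"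
  shows "b r \<le> b i \<and> d r \<le> d i"
  using assms(2,3)
proof (induction r rule: dec_induct)
  case (step k)
  then show ?case using ends_step[of k] assms(1) by fastforce
qed simp

lemma subset_grid: "I \<subseteq> grid m n"
  using interval by (simp add: is_interval_def)

lemma right_corner:
  assumes "s \<le> j" "j \<le> t"
  obtains j' where "s \<le> j'" "j' \<le> j" "d j' = d j" "j' = s \<or> d j' < d (j' - 1)"
proof -
  let ?P = "\<lambda>k. s \<le> k \<and> d k = d j"
  define j' where "j' = (LEAST k. ?P k)"
  have "?P j'" "j' \<le> j" using assms LeastI[of ?P j] Least_le[of ?P j] by (auto simp: j'_def)
  moreover have "d j' < d (j' - 1)" if "j' \<noteq> s"
  proof -
    have "\<not> ?P (j' - 1)" using not_less_Least[of "j' - 1" ?P] \<open>?P j'\<close> that by (auto simp: j'_def)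
    then show ?thesis
      using ends_antimono[of "j' - 1" j'] \<open>?P j'\<close> \<open>j' \<le> j\<close> assms that by fastforce
  qed
  ultimately show thesis using that by blast
qed

lemma left_corner:
  assumes "s \<le> j" "j \<le> t"
  obtains j' where "j \<le> j'" "j' \<le> t" "b j' = b j" "j' = t \<or> b (j' + 1) < b j'"
proof -
  let ?P = "\<lambda>k. j \<le> k \<and> k \<le> t \<and> b k = b j"
  define j' where "j' = (GREATEST k. ?P k)"
  have "?P j'" using assms GreatestI_nat[of ?P j t] by (auto simp: j'_def)
  moreover have "b (j' + 1) < b j'" if "j' \<noteq> t"
  proof -
    have "\<not> ?P (j' + 1)" using Greatest_le_nat[of ?P "j' + 1" t] by (auto simp: j'_def)
    then show ?thesis
      using ends_antimono[of j' "j' + 1"] \<open>?P j'\<close> assms that by fastforce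
  qed
  ultimately show thesis using that by blast
qed


lemma insert_right_interval:
  assumes j: "s \<le> j" "j \<le> t" and corner: "j = s \<or> d j < d (j - 1)"
    and v: "(j, d j + 1) \<in> grid m n"
  shows "is_interval m n (insert (j, d j + 1) I)"
proof (rule interval_insert[OF interval v])
  show u: "(j, d j) \<in> I" using j row_bounds by (simp add: mem_iff)
  show "grid_arrow m n (j, d j) (j, d j + 1) \<or> grid_arrow m n (j, d j + 1) (j, d j)"
    using u v subset_grid by (auto simp: grid_arrow_def)
next
  fix i x r y assume "(i, x) \<in> I" "(i, x) \<le> (r, y)" "(r, y) \<le> (j, d j + 1)"
  then have i: "s \<le> i" "b i \<le> x" and r: "i \<le> r" "r \<le> j" "x \<le> y" "y \<le> d j + 1"
    by (auto simp: mem_iff)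
  have "b r \<le> b i" "d j \<le> d r" using ends_antimono[of i r] ends_antimono[of r j] i r j by auto
  moreover have "d (j - 1) \<le> d r" if "r < j" using ends_antimono[of r "j - 1"] i r j that by auto
  ultimately show "(r, y) \<in> insert (j, d j + 1) I"
    using i r j corner by (cases "r = j") (auto simp: mem_iff)
next
  fix i x r y assume "(i, x) \<in> I" "(j, d j + 1) \<le> (r, y)" "(r, y) \<le> (i, x)"
  then show "(r, y) \<in> insert (j, d j + 1) I" using ends_antimono[of j i] j by (auto simp: mem_iff)
qed

lemma insert_left_interval:
  assumes j: "s \<le> j" "j \<le> t" and corner: "j = t \<or> b (j + 1) < b j"
    and v: "(j, b j - 1) \<in> grid m n"
  shows "is_interval m n (insert (j, b j - 1) I)"
proof (rule interval_insert[OF interval v])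
  have "2 \<le> b j" using v by (auto simp: grid_def)
  show u: "(j, b j) \<in> I" using j row_bounds by (simp add: mem_iff)
  show "grid_arrow m n (j, b j) (j, b j - 1) \<or> grid_arrow m n (j, b j - 1) (j, b j)"
    using u v subset_grid \<open>2 \<le> b j\<close> by (auto simp: grid_arrow_def)
next
  fix i x r y assume "(i, x) \<in> I" "(i, x) \<le> (r, y)" "(r, y) \<le> (j, b j - 1)"
  then show "(r, y) \<in> insert (j, b j - 1) I"
    using ends_antimono[of i j] row_bounds[of j] j by (auto simp: mem_iff)
next
  fix i x r y assume "(i, x) \<in> I" "(j, b j - 1) \<le> (r, y)" "(r, y) \<le> (i, x)"
  then have i: "i \<le> t" "x \<le> d i" and r: "j \<le> r" "r \<le> i" "b j - 1 \<le> y" "y \<le> x"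
    by (auto simp: mem_iff)
  have "b r \<le> b j" "d i \<le> d r" using ends_antimono[of j r] ends_antimono[of r i] i r j by auto
  moreover have "b r \<le> b (j + 1)" if "j < r" using ends_antimono[of "j + 1" r] i r j that by auto
  ultimately show "(r, y) \<in> insert (j, b j - 1) I"
    using i r j corner by (cases "r = j") (auto simp: mem_iff)
qed

lemma insert_below_interval:
  assumes v: "(t + 1, b t) \<in> grid m n"
  shows "is_interval m n (insert (t + 1, b t) I)"
proof (rule interval_insert[OF interval v])
  show u: "(t, b t) \<in> I" using rows row_bounds by (simp add: mem_iff)
  show "grid_arrow m n (t, b t) (t + 1, b t) \<or> grid_arrow m n (t + 1, b t) (t, b t)"
    using u v subset_grid by (auto simp: grid_arrow_def)
next
  fix i x r y assume "(i, x) \<in> I" "(i, x) \<le> (r, y)" "(r, y) \<le> (t + 1, b t)"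
  then have i: "s \<le> i" "i \<le> t" "b i \<le> x" and r: "i \<le> r" "r \<le> t + 1" "x \<le> y" "y \<le> b t"
    by (auto simp: mem_iff)
  have "b t \<le> b r \<and> b r \<le> b i" if "r \<le> t"
    using ends_antimono[of r t] ends_antimono[of i r] i r that by auto
  moreover have "b t \<le> b i" using ends_antimono[of i t] i by auto
  ultimately show "(r, y) \<in> insert (t + 1, b t) I"
    using i r row_bounds[of r] by (cases "r = t + 1") (auto simp: mem_iff)
next
  fix i x r y assume "(i, x) \<in> I" "(t + 1, b t) \<le> (r, y)" "(r, y) \<le> (i, x)"
  then show "(r, y) \<in> insert (t + 1, b t) I" by (auto simp: mem_iff)
qed

lemma insert_above_interval:
  assumes v: "(s - 1, d s) \<in> grid m n"
  shows "is_interval m n (insert (s - 1, d s) I)"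
proof (rule interval_insert[OF interval v])
  have "2 \<le> s" using v by (auto simp: grid_def)
  show u: "(s, d s) \<in> I" using rows row_bounds by (simp add: mem_iff)
  show "grid_arrow m n (s, d s) (s - 1, d s) \<or> grid_arrow m n (s - 1, d s) (s, d s)"
    using u v subset_grid \<open>2 \<le> s\<close> by (auto simp: grid_arrow_def)
next
  fix i x r y assume "(i, x) \<in> I" "(i, x) \<le> (r, y)" "(r, y) \<le> (s - 1, d s)"
  then show "(r, y) \<in> insert (s - 1, d s) I" using rows by (auto simp: mem_iff)
next
  fix i x r y assume "(i, x) \<in> I" "(s - 1, d s) \<le> (r, y)" "(r, y) \<le> (i, x)"
  then have i: "s \<le> i" "i \<le> t" "x \<le> d i" and r: "s - 1 \<le> r" "r \<le> i" "d s \<le> y" "y \<le> x"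
    by (auto simp: mem_iff)
  have "d i \<le> d r \<and> d r \<le> d s" if "s \<le> r"
    using ends_antimono[of r i] ends_antimono[of s r] i r that by auto
  moreover have "d i \<le> d s" using ends_antimono[of s i] i by auto
  ultimately show "(r, y) \<in> insert (s - 1, d s) I"
    using i r row_bounds[of r] by (cases "s \<le> r") (auto simp: mem_iff)
qed

definition cover_vertex :: "nat \<times> nat \<Rightarrow> bool" where
  "cover_vertex v \<longleftrightarrow>
     (\<exists>j. s \<le> j \<and> j \<le> t \<and> v = (j, b j - 1)) \<or> (\<exists>j. s \<le> j \<and> j \<le> t \<and> v = (j, d j + 1)) \<or>
     v = (t + 1, b t) \<or> v = (s - 1, d s)"

lemma cover_vertex_notin:
  assumes "cover_vertex v"
  shows "v \<notin> I"
proof -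
  have "(j, b j - 1) \<notin> I" "(j, d j + 1) \<notin> I" if "s \<le> j" "j \<le> t" for j
    using row_bounds[OF that] by (auto simp: mem_iff)
  moreover have "(t + 1, b t) \<notin> I" "(s - 1, d s) \<notin> I" using rows by (auto simp: mem_iff)
  ultimately show ?thesis using assms by (auto simp: cover_vertex_def)
qed

lemma cover_vertex_from_below:
  assumes J: "is_interval m n J" "I \<subseteq> J" and u: "(i, x) \<in> I"
    and w: "(i + 1, x) \<in> J" "(i + 1, x) \<notin> I"
  shows "\<exists>v\<in>J. cover_vertex v"
proof (cases "i = t")
  case True
  have "(t, b t) \<in> I" "b t \<le> x" using rows row_bounds u True by (auto simp: mem_iff)
  then have "(t + 1, b t) \<in> J" using interval_convex[OF J(1) _ w(1)] J(2) True by auto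
  then show ?thesis by (auto simp: cover_vertex_def)
next
  case False
  then have i: "s \<le> i" "i < t" using u by (auto simp: mem_iff)
  then have "b (i + 1) \<le> x" "(i + 1, d (i + 1)) \<in> I"
    using u ends_step[of i] row_bounds[of "i + 1"] by (auto simp: mem_iff)
  moreover have "d (i + 1) < x" using calculation w i by (auto simp: mem_iff)
  ultimately have "(i + 1, d (i + 1) + 1) \<in> J" using interval_convex[OF J(1) _ w(1)] J(2) by auto
  moreover have "cover_vertex (i + 1, d (i + 1) + 1)" using i by (auto simp: cover_vertex_def)
  ultimately show ?thesis by blast
qed

lemma cover_vertex_from_above:
  assumes J: "is_interval m n J" "I \<subseteq> J" and u: "(i, x) \<in> I"
    and w: "(i - 1, x) \<in> J" "(i - 1, x) \<notin> I"
  shows "\<exists>v\<in>J. cover_vertex v"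
proof (cases "i = s")
  case True
  have "(s, d s) \<in> I" "x \<le> d s" using rows row_bounds u True by (auto simp: mem_iff)
  then have "(s - 1, d s) \<in> J" using interval_convex[OF J(1) w(1)] J(2) True by auto
  then show ?thesis by (auto simp: cover_vertex_def)
next
  case False
  then have i: "s \<le> i - 1" "i - 1 < t" "Suc (i - 1) = i" using u by (auto simp: mem_iff)
  then have "x \<le> d (i - 1)" "(i - 1, b (i - 1)) \<in> I"
    using u ends_step[of "i - 1"] row_bounds[of "i - 1"] by (auto simp: mem_iff)
  moreover have "x < b (i - 1)" using calculation w i by (auto simp: mem_iff)
  ultimately have "(i - 1, b (i - 1) - 1) \<in> J" using interval_convex[OF J(1) w(1)] J(2) by auto
  moreover have "cover_vertex (i - 1, b (i - 1) - 1)" using i by (auto simp: cover_vertex_def)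
  ultimately show ?thesis by blast
qed

lemma superset_contains_cover_vertex:
  assumes J: "is_interval m n J" "I \<subset> J"
  shows "\<exists>v\<in>J. cover_vertex v"
proof -
  obtain p q where "p \<in> I" "q \<in> J" "q \<notin> I" using J interval by (auto simp: is_interval_def)
  moreover have "sub_connected m n J" using J by (simp add: is_interval_def)
  ultimately obtain i x w where u: "(i, x) \<in> I" and w: "w \<in> J" "w \<notin> I"
      and adj: "grid_arrow m n (i, x) w \<or> grid_arrow m n w (i, x)"
    using sub_connected_leaves J(2) by (metis psubset_imp_subset surj_pair)
  have i: "s \<le> i" "i \<le> t" "b i \<le> x" "x \<le> d i" using u by (simp_all add: mem_iff)
  consider "w = (i, x + 1)" | "w = (i + 1, x)" | "w = (i, x - 1)" | "w = (i - 1, x)"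
    using adj by (cases w) (auto simp: grid_arrow_def)
  then show ?thesis
  proof cases
    case 1
    then have "x = d i" using w i by (auto simp: mem_iff)
    then show ?thesis using 1 w i by (auto simp: cover_vertex_def)
  next
    case 3
    then have "x = b i" using w i by (cases "x = 0") (auto simp: mem_iff)
    then show ?thesis using 3 w i by (auto simp: cover_vertex_def)
  qed (use cover_vertex_from_below cover_vertex_from_above J u w in auto)
qed

lemma superset_contains_insert_interval:
  assumes J: "is_interval m n J" "I \<subseteq> J" and v: "v \<in> J" "cover_vertex v"
  shows "\<exists>v'\<in>J. cover_vertex v' \<and> is_interval m n (insert v' I)"
proof -
  have grid: "p \<in> J \<Longrightarrow> p \<in> grid m n" for p using J by (auto simp: is_interval_def)
  consider (left) j where "s \<le> j" "j \<le> t" "v = (j, b j - 1)"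
    | (right) j where "s \<le> j" "j \<le> t" "v = (j, d j + 1)"
    | (below) "v = (t + 1, b t)" | (above) "v = (s - 1, d s)"
    using v(2) by (auto simp: cover_vertex_def)
  then show ?thesis
  proof cases
    case left
    obtain j' where j': "j \<le> j'" "j' \<le> t" "b j' = b j" "j' = t \<or> b (j' + 1) < b j'"
      using left(1,2) by (rule left_corner)
    then have "(j', b j') \<in> J" using J(2) left row_bounds[of j'] by (auto simp: mem_iff)
    then have "(j', b j' - 1) \<in> J" using interval_convex[OF J(1) v(1)] left j' by auto
    moreover have "cover_vertex (j', b j' - 1)" using left j' by (auto simp: cover_vertex_def)
    moreover have "s \<le> j'" using left j' by simp
    ultimately show ?thesis using insert_left_interval[of j'] grid j' by blast
  next
    case right
    obtain j' where j': "s \<le> j'" "j' \<le> j" "d j' = d j" "j' = s \<or> d j' < d (j' - 1)"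
      using right(1,2) by (rule right_corner)
    then have "(j', d j') \<in> J" using J(2) right row_bounds[of j'] by (auto simp: mem_iff)
    then have "(j', d j' + 1) \<in> J" using interval_convex[OF J(1) _ v(1)] right j' by auto
    moreover have "cover_vertex (j', d j' + 1)" using right j' by (auto simp: cover_vertex_def)
    moreover have "j' \<le> t" using right j' by simp
    ultimately show ?thesis using insert_right_interval[of j'] grid j' by blast
  next
    case below
    then show ?thesis using insert_below_interval grid v by auto
  next
    case above
    then show ?thesis using insert_above_interval grid v by auto
  qed
qed

lemma Cov_eq_cover_vertices:
  "Cov m n I = {J. \<exists>v\<in>{v \<in> grid m n. cover_vertex v}. J = insert v I} \<inter> intervals m n"
proof (rule Cov_eq_insert)
  show "\<forall>v\<in>{v \<in> grid m n. cover_vertex v}. v \<notin> I" using cover_vertex_notin by blast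
  fix J assume "J \<in> intervals m n" "I \<subset> J"
  then have J: "is_interval m n J" "I \<subset> J" by (simp_all add: intervals_def)
  then obtain v where "v \<in> J" "cover_vertex v" using superset_contains_cover_vertex by blast
  then obtain v' where "v' \<in> J" "cover_vertex v'" "is_interval m n (insert v' I)"
    using superset_contains_insert_interval J by blast
  then show "\<exists>v\<in>{v \<in> grid m n. cover_vertex v} \<inter> J. insert v I \<in> intervals m n"
    using J(1) by (auto simp: intervals_def is_interval_def)
qed

end

theorem mainTheorem3:
  fixes m n s t :: nat and b d :: "nat \<Rightarrow> nat" and I :: "(nat \<times> nat) set"
  assumes "1 \<le> m" and "1 \<le> n"
    and "I \<in> intervals m n"
    and "staircase m n s t b d I"
  shows "Cov m n I =
    {J. \<exists>v \<in> grid m n. J = I \<union> {v} \<and>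
          ((\<exists>j. s \<le> j \<and> j \<le> t \<and> v = (j, b j - 1)) \<or>
           (\<exists>j. s \<le> j \<and> j \<le> t \<and> v = (j, d j + 1)) \<or>
           v = (t + 1, b t) \<or>
           v = (s - 1, d s))} \<inter> intervals m n"
proof -
  interpret staircase_interval m n s t b d I
    using assms(3,4) by unfold_locales (simp_all add: intervals_def)
  show ?thesis unfolding Cov_eq_cover_vertices cover_vertex_def by auto
qed

end
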